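(* Let $(F_S,\iota)$ be an embedded local étale algebra and $\Gamma\subseteq\mathrm{PGL}_2(F_S)$ a discrete subgroup. Then \[ \mathcal L^S_\Gamma\subseteq\bigcup_{\mathfrak p\in S}\Big(\mathbb P^1(F_\mathfrak p)\times\prod_{\mathfrak q\in S\setminus\{\mathfrak p\}}\mathbb P^1(\mathbf C)\Big), \] i.e. every limit point has at least one coordinate $x_\mathfrak p$ lying in $\mathbb P^1(F_\mathfrak p)$.
   Context: Fix a prime $p$ and let $\mathbf{C}$ be the completion of an algebraic closure of $\mathbb{Q}_p$ or of $\mathbb{F}_p((T))$. An embedded local étale algebra $(F_S,\iota)$ consists of a finite non-empty set $S$, non-Archimedean local fields $F_\mathfrak p$ ($\mathfrak p\in S$) of residue characteristic $p$ and the same characteristic as $\mathbf C$, and embeddings $\iota_\mathfrak p\colon F_\mathfrak p\hookrightarrow\mathbf C$, through which $\mathbb P^1(F_\mathfrak p)\subseteq\mathbb P^1(\mathbf C)$. $\mathrm{PGL}_2(F_S)=\prod_\mathfrak p\mathrm{PGL}_2(F_\mathfrak p)$ (with its locally compact topology) acts componentwise by Möbius transformations on $\mathbb P^1(\mathbf C_S)=\prod_{\mathfrak p\in S}\mathbb P^1(\mathbf C)$. For a subgroup $\Gamma$, $\mathcal L^S_\Gamma$ is the set of $x\in\mathbb P^1(\mathbf C_S)$ such that $\gamma_j(y)\to x$ for some $y$ and pairwise distinct $\gamma_j\in\Gamma$. *)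

theory Defs
  imports Complex_Main "HOL-Computational_Algebra.Polynomial"
begin

definition nonarch_abs :: "('c::field \<Rightarrow> real) \<Rightarrow> bool" where
  "nonarch_abs av \<longleftrightarrow>
     (\<forall>x. av x \<ge> 0) \<and> (\<forall>x. av x = 0 \<longleftrightarrow> x = 0) \<and>
     (\<forall>x y. av (x * y) = av x * av y) \<and>
     (\<forall>x y. av (x + y) \<le> max (av x) (av y))"

definition av_conv :: "('c::field \<Rightarrow> real) \<Rightarrow> (nat \<Rightarrow> 'c) \<Rightarrow> 'c \<Rightarrow> bool" where
  "av_conv av f l \<longleftrightarrow> (\<lambda>n. av (f n - l)) \<longlonglongrightarrow> 0"

definition av_cauchy :: "('c::field \<Rightarrow> real) \<Rightarrow> (nat \<Rightarrow> 'c) \<Rightarrow> bool" where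
  "av_cauchy av f \<longleftrightarrow> (\<forall>e>0. \<exists>N. \<forall>m\<ge>N. \<forall>n\<ge>N. av (f m - f n) < e)"

definition subfield :: "'c::field set \<Rightarrow> bool" where
  "subfield K \<longleftrightarrow> 0 \<in> K \<and> 1 \<in> K \<and> (\<forall>x\<in>K. \<forall>y\<in>K. x + y \<in> K \<and> x * y \<in> K) \<and>
     (\<forall>x\<in>K. - x \<in> K) \<and> (\<forall>x\<in>K. x \<noteq> 0 \<longrightarrow> inverse x \<in> K)"

text \<open>(The image of) a non-Archimedean local field inside the valued field:
  a non-discrete, locally compact subfield (closed balls sequentially compact).\<close>
definition local_subfield :: "('c::field \<Rightarrow> real) \<Rightarrow> 'c set \<Rightarrow> bool" where
  "local_subfield av K \<longleftrightarrow> subfield K \<and>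
     (\<forall>e>0. \<exists>x\<in>K. 0 < av x \<and> av x < e) \<and>
     (\<exists>r>0. \<forall>f::nat \<Rightarrow> 'c. (\<forall>n. f n \<in> K \<and> av (f n) \<le> r) \<longrightarrow>
         (\<exists>l\<in>K. \<exists>s. strict_mono s \<and> av_conv av (f \<circ> s) l))"

definition algebraic_over :: "'c::field set \<Rightarrow> 'c \<Rightarrow> bool" where
  "algebraic_over K z \<longleftrightarrow> (\<exists>q. q \<noteq> 0 \<and> (\<forall>i. coeff q i \<in> K) \<and> poly q z = 0)"

text \<open>\<open>(C, av)\<close> is the completion of an algebraic closure of a local field of residue
  characteristic \<open>p\<close> (equivalently of \<open>\<int>_p\<close>'s fraction field \<open>\<rat>_p\<close> or \<open>\<bbbF>_p((T))\<close>):
  complete, algebraically closed, \<open>|p| < 1\<close>, and the elements algebraic over some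
  local subfield are dense.\<close>
definition is_C :: "nat \<Rightarrow> ('c::field \<Rightarrow> real) \<Rightarrow> bool" where
  "is_C p av \<longleftrightarrow> prime p \<and> nonarch_abs av \<and> av (of_nat p) < 1 \<and>
     (\<forall>f. av_cauchy av f \<longrightarrow> (\<exists>l. av_conv av f l)) \<and>
     (\<forall>q::'c poly. degree q \<ge> 1 \<longrightarrow> (\<exists>z. poly q z = 0)) \<and>
     (\<exists>K. local_subfield av K \<and>
        (\<forall>z. \<forall>e>0. \<exists>w. algebraic_over K w \<and> av (z - w) < e))"

text \<open>\<open>\<bbbP>\<^sup>1(C)\<close> as \<open>'c option\<close>, with \<open>None\<close> the point at infinity.\<close>
type_synonym 'c p1 = "'c option"

definition in_P1 :: "'c set \<Rightarrow> 'c p1 \<Rightarrow> bool" where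
  "in_P1 K x \<longleftrightarrow> (case x of None \<Rightarrow> True | Some z \<Rightarrow> z \<in> K)"

text \<open>Chordal metric on \<open>\<bbbP>\<^sup>1(C)\<close> (induces its usual topology).\<close>
definition chord :: "('c::field \<Rightarrow> real) \<Rightarrow> 'c p1 \<Rightarrow> 'c p1 \<Rightarrow> real" where
  "chord av x y = (case (x, y) of
      (None, None) \<Rightarrow> 0
    | (None, Some b) \<Rightarrow> 1 / max 1 (av b)
    | (Some a, None) \<Rightarrow> 1 / max 1 (av a)
    | (Some a, Some b) \<Rightarrow> av (a - b) / (max 1 (av a) * max 1 (av b)))"

definition p1_conv :: "('c::field \<Rightarrow> real) \<Rightarrow> (nat \<Rightarrow> 'c p1) \<Rightarrow> 'c p1 \<Rightarrow> bool" where
  "p1_conv av f x \<longleftrightarrow> (\<lambda>n. chord av (f n) x) \<longlonglongrightarrow> 0"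

text \<open>2x2 matrices \<open>(a,b,c,d)\<close> = [[a,b],[c,d]].\<close>
type_synonym 'c mat2 = "'c \<times> 'c \<times> 'c \<times> 'c"

fun mdet :: "'c::field mat2 \<Rightarrow> 'c" where
  "mdet (a, b, c, d) = a * d - b * c"

fun mmul :: "'c::field mat2 \<Rightarrow> 'c mat2 \<Rightarrow> 'c mat2" where
  "mmul (a, b, c, d) (a', b', c', d') =
     (a * a' + b * c', a * b' + b * d', c * a' + d * c', c * b' + d * d')"

fun msc :: "'c::field \<Rightarrow> 'c mat2 \<Rightarrow> 'c mat2" where
  "msc l (a, b, c, d) = (l * a, l * b, l * c, l * d)"

definition mid :: "'c::field mat2" where "mid = (1, 0, 0, 1)"

fun madj :: "'c::field mat2 \<Rightarrow> 'c mat2" where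
  "madj (a, b, c, d) = (d, - b, - c, a)"

definition gl2 :: "'c::field set \<Rightarrow> 'c mat2 \<Rightarrow> bool" where
  "gl2 K m \<longleftrightarrow> (case m of (a, b, c, d) \<Rightarrow> a \<in> K \<and> b \<in> K \<and> c \<in> K \<and> d \<in> K) \<and> mdet m \<noteq> 0"

definition proj_eq :: "'c::field set \<Rightarrow> 'c mat2 \<Rightarrow> 'c mat2 \<Rightarrow> bool" where
  "proj_eq K m n \<longleftrightarrow> (\<exists>l\<in>K. l \<noteq> 0 \<and> n = msc l m)"

fun mclose :: "('c::field \<Rightarrow> real) \<Rightarrow> real \<Rightarrow> 'c mat2 \<Rightarrow> 'c mat2 \<Rightarrow> bool" where
  "mclose av e (a, b, c, d) (a', b', c', d') \<longleftrightarrow>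
     av (a - a') < e \<and> av (b - b') < e \<and> av (c - c') < e \<and> av (d - d') < e"

fun moebius :: "'c::field mat2 \<Rightarrow> 'c p1 \<Rightarrow> 'c p1" where
  "moebius (a, b, c, d) None = (if c = 0 then None else Some (a / c))"
| "moebius (a, b, c, d) (Some z) =
     (if c * z + d = 0 then None else Some ((a * z + b) / (c * z + d)))"

text \<open>An element of \<open>PGL_2(F_S)\<close> is represented by a family \<open>g\<close> with \<open>g \<pp> \<in> GL_2(F_\<pp>)\<close>
  for \<open>\<pp> \<in> S\<close> (values outside \<open>S\<close> are irrelevant).  A subgroup \<open>\<Gamma>\<close> is given by a set
  of representatives whose classes form a subgroup.\<close>

definition pgl_eq :: "'i set \<Rightarrow> ('i \<Rightarrow> 'c::field set) \<Rightarrow> ('i \<Rightarrow> 'c mat2) \<Rightarrow> ('i \<Rightarrow> 'c mat2) \<Rightarrow> bool" where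
  "pgl_eq S F g h \<longleftrightarrow> (\<forall>p\<in>S. proj_eq (F p) (g p) (h p))"

definition pgl_subgroup :: "'i set \<Rightarrow> ('i \<Rightarrow> 'c::field set) \<Rightarrow> ('i \<Rightarrow> 'c mat2) set \<Rightarrow> bool" where
  "pgl_subgroup S F \<Gamma> \<longleftrightarrow>
     (\<forall>g\<in>\<Gamma>. \<forall>p\<in>S. gl2 (F p) (g p)) \<and>
     (\<exists>e\<in>\<Gamma>. pgl_eq S F (\<lambda>_. mid) e) \<and>
     (\<forall>g\<in>\<Gamma>. \<forall>h\<in>\<Gamma>. \<exists>k\<in>\<Gamma>. pgl_eq S F (\<lambda>p. mmul (g p) (h p)) k) \<and>
     (\<forall>g\<in>\<Gamma>. \<exists>k\<in>\<Gamma>. pgl_eq S F (\<lambda>p. madj (g p)) k)"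

text \<open>Discreteness w.r.t. the (product of quotient) topology on \<open>PGL_2(F_S)\<close>:
  each element has a basic neighbourhood meeting \<open>\<Gamma>\<close> only in itself.\<close>
definition pgl_discrete :: "('c::field \<Rightarrow> real) \<Rightarrow> 'i set \<Rightarrow> ('i \<Rightarrow> 'c set) \<Rightarrow> ('i \<Rightarrow> 'c mat2) set \<Rightarrow> bool" where
  "pgl_discrete av S F \<Gamma> \<longleftrightarrow>
     (\<forall>g\<in>\<Gamma>. \<exists>e>0. \<forall>h\<in>\<Gamma>.
        (\<forall>p\<in>S. \<exists>l\<in>F p. l \<noteq> 0 \<and> mclose av e (msc l (h p)) (g p)) \<longrightarrow> pgl_eq S F g h)"

text \<open>The limit set \<open>\<L>^S_\<Gamma>\<close> in \<open>\<bbbP>\<^sup>1(C_S)\<close> (points are families \<open>x :: 'i \<Rightarrow> 'c p1\<close>,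
  only coordinates in \<open>S\<close> matter).\<close>
definition limit_set :: "('c::field \<Rightarrow> real) \<Rightarrow> 'i set \<Rightarrow> ('i \<Rightarrow> 'c set) \<Rightarrow> ('i \<Rightarrow> 'c mat2) set \<Rightarrow> ('i \<Rightarrow> 'c p1) set" where
  "limit_set av S F \<Gamma> = {x. \<exists>y \<gamma>. (\<forall>j. \<gamma> j \<in> \<Gamma>) \<and>
      (\<forall>i j. i \<noteq> j \<longrightarrow> \<not> pgl_eq S F (\<gamma> i) (\<gamma> j)) \<and>
      (\<forall>p\<in>S. p1_conv av (\<lambda>j. moebius (\<gamma> j p) (y p)) (x p))}"

end

theory Submission
  imports Defs
begin

text \<open>Suppose no coordinate \<open>x\<^sub>\<pp>\<close> of the limit point lies in \<open>\<bbbP>\<^sup>1(F\<^sub>\<pp>)\<close>, and let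
  \<open>\<gamma>\<^sub>j(y) \<rightarrow> x\<close> with pairwise distinct \<open>\<gamma>\<^sub>j \<in> \<Gamma>\<close>. Rescale every coordinate of \<open>\<gamma>\<^sub>j\<close> within
  \<open>F\<^sub>\<pp>\<close> to a fixed small norm; local compactness of the \<open>F\<^sub>\<pp>\<close> and finiteness of \<open>S\<close> give a
  subsequence along which all rescaled coordinates converge to nonzero matrices \<open>M\<^sub>\<pp>\<close>.
  If some \<open>M\<^sub>\<pp>\<close> is singular, it has rank one, and the images \<open>\<gamma>\<^sub>j(y\<^sub>\<pp>)\<close> either stay in the
  closed set \<open>\<bbbP>\<^sup>1(F\<^sub>\<pp>)\<close> or converge to the single \<open>F\<^sub>\<pp>\<close>-rational image point of \<open>M\<^sub>\<pp>\<close>;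
  either way \<open>x\<^sub>\<pp> \<in> \<bbbP>\<^sup>1(F\<^sub>\<pp>)\<close>. So all \<open>M\<^sub>\<pp>\<close> are invertible; then consecutive quotients
  \<open>\<gamma>\<^sub>j \<gamma>\<^sub>j\<^sub>+\<^sub>1\<^sup>-\<^sup>1\<close> converge to the identity in \<open>PGL\<^sub>2(F\<^sub>S)\<close>, and discreteness makes two of
  the \<open>\<gamma>\<^sub>j\<close> coincide in \<open>PGL\<^sub>2\<close>.\<close>

lemma strict_mono_common_subseq:
  fixes P :: "'i \<Rightarrow> (nat \<Rightarrow> nat) \<Rightarrow> bool"
  assumes "finite S"
    and "\<And>i t. i \<in> S \<Longrightarrow> strict_mono t \<Longrightarrow> \<exists>u::nat \<Rightarrow> nat. strict_mono u \<and> P i (t \<circ> u)"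
    and "\<And>i t (u::nat \<Rightarrow> nat). P i t \<Longrightarrow> strict_mono u \<Longrightarrow> P i (t \<circ> u)"
  shows "\<exists>s. strict_mono s \<and> (\<forall>i\<in>S. P i s)"
  using assms(1,2)
proof (induction S rule: finite_induct)
  case empty
  show ?case using strict_mono_id by blast
next
  case (insert i S)
  then obtain s where s: "strict_mono s" "\<forall>i'\<in>S. P i' s" by blast
  obtain u where u: "strict_mono u" "P i (s \<circ> u)" using insert.prems[of i s] s(1) by blast
  have "strict_mono (s \<circ> u)" using s(1) u(1) by (rule strict_mono_o)
  with s(2) u assms(3) show ?case by blast
qed

lemma tendsto_zero_squeeze:
  fixes f g :: "nat \<Rightarrow> real"
  assumes "g \<longlonglongrightarrow> 0" and "\<And>n. f n \<le> g n" and "\<And>n. 0 \<le> f n"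
  shows "f \<longlonglongrightarrow> 0"
  using assms by (intro tendsto_sandwich[of "\<lambda>_. 0" f sequentially g]) (simp_all add: always_eventually)

lemma
  assumes "subfield K"
  shows subfield_0: "0 \<in> K" and subfield_1: "1 \<in> K"
    and subfield_add: "x \<in> K \<Longrightarrow> y \<in> K \<Longrightarrow> x + y \<in> K"
    and subfield_mult: "x \<in> K \<Longrightarrow> y \<in> K \<Longrightarrow> x * y \<in> K"
    and subfield_uminus: "x \<in> K \<Longrightarrow> - x \<in> K"
    and subfield_diff: "x \<in> K \<Longrightarrow> y \<in> K \<Longrightarrow> x - y \<in> K"
    and subfield_divide: "x \<in> K \<Longrightarrow> y \<in> K \<Longrightarrow> x / y \<in> K"
  using assms unfolding subfield_def
  by (simp_all, metis diff_conv_add_uminus, metis divide_eq_0_iff divide_inverse)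

lemmas subfield_closed = subfield_0 subfield_1 subfield_add subfield_mult subfield_uminus
  subfield_diff subfield_divide

lemma local_subfield_subfield: "local_subfield av K \<Longrightarrow> subfield K"
  unfolding local_subfield_def by blast

section \<open>Matrices\<close>

fun m11 :: "'c mat2 \<Rightarrow> 'c" where "m11 (a, b, c, d) = a"

fun m12 :: "'c mat2 \<Rightarrow> 'c" where "m12 (a, b, c, d) = b"

fun m21 :: "'c mat2 \<Rightarrow> 'c" where "m21 (a, b, c, d) = c"

fun m22 :: "'c mat2 \<Rightarrow> 'c" where "m22 (a, b, c, d) = d"

lemma mat2_eq_entries: "X = (m11 X, m12 X, m21 X, m22 X)"
  by (cases X) simp

lemma mmul_entries: "mmul X Y =
    (m11 X * m11 Y + m12 X * m21 Y, m11 X * m12 Y + m12 X * m22 Y,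
     m21 X * m11 Y + m22 X * m21 Y, m21 X * m12 Y + m22 X * m22 Y)"
  by (cases X; cases Y) simp

lemma madj_entries: "madj X = (m22 X, - m12 X, - m21 X, m11 X)"
  by (cases X) simp

lemma msc_entries: "msc l X = (l * m11 X, l * m12 X, l * m21 X, l * m22 X)"
  by (cases X) simp

lemma mdet_entries: "mdet X = m11 X * m22 X - m12 X * m21 X"
  by (cases X) simp

lemma msc_msc: "msc a (msc b X) = msc (a * b) X"
  by (cases X) (simp add: mult.assoc)

lemma msc_1: "msc 1 X = X"
  by (cases X) simp

lemma msc_eq_zero_iff: "msc l X = (0, 0, 0, 0) \<longleftrightarrow> l = 0 \<or> X = (0, 0, 0, 0)"
  by (cases X) auto

lemma mmul_msc_left: "mmul (msc l X) Y = msc l (mmul X Y)"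
  and mmul_msc_right: "mmul X (msc l Y) = msc l (mmul X Y)"
  by (cases X; cases Y; simp add: algebra_simps)+

lemma madj_msc: "madj (msc l X) = msc l (madj X)"
  by (cases X) simp

lemma mmul_assoc: "mmul (mmul X Y) Z = mmul X (mmul Y Z)"
  by (cases X; cases Y; cases Z) (simp add: algebra_simps)

lemma mmul_mid: "mmul X mid = X" and mid_mmul: "mmul mid X = X"
  by (cases X; simp add: mid_def)+

lemma mmul_madj: "mmul X (madj X) = msc (mdet X) mid"
  and madj_mmul: "mmul (madj X) X = msc (mdet X) mid"
  by (cases X; simp add: mid_def algebra_simps)+

lemma moebius_msc: "l \<noteq> 0 \<Longrightarrow> moebius (msc l X) y = moebius X y"
proof (cases X; cases y)
  fix a b c d z
  assume "l \<noteq> 0" "X = (a, b, c, d)" "y = Some z"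
  moreover have "l * c * z + l * d = l * (c * z + d)" "l * a * z + l * b = l * (a * z + b)"
    by (simp_all add: algebra_simps)
  ultimately show ?thesis by simp
qed simp_all

lemma mmul_madj_scalar_imp_eq:
  assumes "mdet A \<noteq> 0" and "mdet B \<noteq> 0" and "mmul A (madj B) = msc t mid"
  shows "t \<noteq> 0" and "B = msc (mdet B / t) A"
proof -
  have "msc (mdet B) A = mmul (mmul A (madj B)) B"
    by (simp add: mmul_assoc madj_mmul mmul_msc_right mmul_mid)
  also have "\<dots> = msc t B"
    by (simp add: assms(3) mmul_msc_left mid_mmul)
  finally have eq: "msc t B = msc (mdet B) A" ..
  show "t \<noteq> 0"
  proof
    assume "t = 0"
    then have "msc (mdet B) A = (0, 0, 0, 0)" using eq by (cases B) simp
    with assms(1,2) show False by (auto simp: msc_eq_zero_iff)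
  qed
  then show "B = msc (mdet B / t) A"
    using arg_cong[OF eq, of "msc (1 / t)"] by (simp add: msc_msc msc_1)
qed

definition mat_over :: "'c::field set \<Rightarrow> 'c mat2 \<Rightarrow> bool" where
  "mat_over K X \<longleftrightarrow> m11 X \<in> K \<and> m12 X \<in> K \<and> m21 X \<in> K \<and> m22 X \<in> K"

definition mnorm :: "('c::field \<Rightarrow> real) \<Rightarrow> 'c mat2 \<Rightarrow> real" where
  "mnorm av X = max (max (av (m11 X)) (av (m12 X))) (max (av (m21 X)) (av (m22 X)))"

definition mconv :: "('c::field \<Rightarrow> real) \<Rightarrow> (nat \<Rightarrow> 'c mat2) \<Rightarrow> 'c mat2 \<Rightarrow> bool" where
  "mconv av f M \<longleftrightarrow>
     av_conv av (\<lambda>j. m11 (f j)) (m11 M) \<and> av_conv av (\<lambda>j. m12 (f j)) (m12 M) \<and>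
     av_conv av (\<lambda>j. m21 (f j)) (m21 M) \<and> av_conv av (\<lambda>j. m22 (f j)) (m22 M)"

lemma gl2_imp_mat_over: "gl2 K X \<Longrightarrow> mat_over K X"
  unfolding gl2_def mat_over_def by (cases X) simp

lemma mat_over_msc: "subfield K \<Longrightarrow> l \<in> K \<Longrightarrow> mat_over K X \<Longrightarrow> mat_over K (msc l X)"
  unfolding mat_over_def msc_entries by (simp add: subfield_mult)

lemma mdet_in: "subfield K \<Longrightarrow> mat_over K X \<Longrightarrow> mdet X \<in> K"
  unfolding mat_over_def mdet_entries by (simp add: subfield_diff subfield_mult)

lemma moebius_in_P1:
  assumes K: "subfield K" and X: "mat_over K X" and y: "in_P1 K y"
  shows "in_P1 K (moebius X y)"
proof -
  obtain a b c d where "X = (a, b, c, d)" and "a \<in> K" "b \<in> K" "c \<in> K" "d \<in> K"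
    using X unfolding mat_over_def by (cases X) auto
  with y show ?thesis
    by (cases y) (auto simp: in_P1_def subfield_closed[OF K])
qed

text \<open>A nonzero singular matrix maps every point off its kernel to one and the same point,
  which lies in \<open>\<bbbP>\<^sup>1(K)\<close> when the matrix is over \<open>K\<close>; its kernel is \<open>K\<close>-rational, so it
  does not contain \<open>z \<notin> K\<close>.\<close>

lemma singular_mat_value_in:
  assumes K: "subfield K" and M: "mat_over K M" "M \<noteq> (0, 0, 0, 0)" "mdet M = 0"
    and z: "z \<notin> K" and w: "w * (m21 M * z + m22 M) = m11 M * z + m12 M"
  shows "w \<in> K"
proof -
  obtain A B C D where ABCD: "M = (A, B, C, D)" by (cases M)
  have in_K: "A \<in> K" "B \<in> K" "C \<in> K" "D \<in> K" using M(1) unfolding ABCD mat_over_def by simp_all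
  have det: "A * D = B * C" using M(3) unfolding ABCD by simp
  have w': "w * (C * z + D) = A * z + B" using w unfolding ABCD by simp
  have root_in_K: "u \<in> K" if "P * u + Q = 0" "P \<noteq> 0" "P \<in> K" "Q \<in> K" for P Q u
  proof -
    have "u = - Q / P" using that by (simp add: field_simps add_eq_0_iff)
    then show ?thesis using that K by (simp add: subfield_closed)
  qed
  show ?thesis
  proof (cases "C = 0")
    case False
    then have "C * z + D \<noteq> 0" using root_in_K[of C z D] in_K z by blast
    moreover have "(C * w) * (C * z + D) = C * (A * z + B)"
      using w' by (metis mult.assoc)
    moreover have "C * (A * z + B) = A * (C * z + D)"
      using det by (simp add: algebra_simps)
    ultimately have "C * w = A" by (metis mult_cancel_right)
    then have "w = A / C" using False by (simp add: eq_divide_eq mult.commute)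
    then show ?thesis using in_K K by (simp add: subfield_divide)
  next
    case True
    show ?thesis
    proof (cases "D = 0")
      case False
      then have "w = B / D" using w' det True by (simp add: field_simps)
      then show ?thesis using in_K K by (simp add: subfield_divide)
    next
      case D: True
      then have "A * z + B = 0" using w' True by simp
      moreover have "A \<noteq> 0" using M(2) \<open>A * z + B = 0\<close> True D unfolding ABCD by auto
      ultimately show ?thesis using root_in_K[of A z B] in_K z by blast
    qed
  qed
qed

lemma proj_eq_sym:
  assumes K: "subfield K" and "proj_eq K X Y"
  shows "proj_eq K Y X"
proof -
  obtain a where "a \<in> K" "a \<noteq> 0" "Y = msc a X" using assms(2) unfolding proj_eq_def by blast
  then show ?thesis
    unfolding proj_eq_def using subfield_divide[OF K subfield_1[OF K]]
    by (intro bexI[of _ "1 / a"] conjI) (simp_all add: msc_msc msc_1)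
qed

lemma proj_eq_trans:
  assumes K: "subfield K" and "proj_eq K X Y" and "proj_eq K Y Z"
  shows "proj_eq K X Z"
proof -
  obtain a b where "a \<in> K" "a \<noteq> 0" "Y = msc a X" "b \<in> K" "b \<noteq> 0" "Z = msc b Y"
    using assms(2,3) unfolding proj_eq_def by blast
  then show ?thesis
    unfolding proj_eq_def using subfield_mult[OF K]
    by (intro bexI[of _ "b * a"] conjI) (simp_all add: msc_msc)
qed

lemma proj_eq_mmul_left: "proj_eq K X Y \<Longrightarrow> proj_eq K (mmul A X) (mmul A Y)"
  unfolding proj_eq_def by (auto simp: mmul_msc_right)

lemma proj_eq_if_mmul_madj_trivial:
  assumes K: "subfield K" and A: "gl2 K A" and B: "gl2 K B"
    and "proj_eq K mid (mmul A (madj B))"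
  shows "proj_eq K A B"
proof -
  obtain t where "t \<in> K" and t: "mmul A (madj B) = msc t mid"
    using assms(4) unfolding proj_eq_def by blast
  have "mdet A \<noteq> 0" "mdet B \<noteq> 0" using A B by (simp_all add: gl2_def)
  from mmul_madj_scalar_imp_eq[OF this t]
  have "t \<noteq> 0" and "B = msc (mdet B / t) A" .
  moreover have "mdet B \<in> K" using mdet_in[OF K gl2_imp_mat_over[OF B]] .
  ultimately show ?thesis
    unfolding proj_eq_def using \<open>t \<in> K\<close> \<open>mdet B \<noteq> 0\<close>
    by (intro bexI[of _ "mdet B / t"] conjI) (simp_all add: subfield_divide[OF K])
qed

lemma pgl_eq_if_mmul_madj_trivial:
  assumes "\<And>q. q \<in> S \<Longrightarrow> subfield (F q)"
    and "\<And>q. q \<in> S \<Longrightarrow> gl2 (F q) (g q)" and "\<And>q. q \<in> S \<Longrightarrow> gl2 (F q) (h q)"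
    and "pgl_eq S F (\<lambda>_. mid) (\<lambda>q. mmul (g q) (madj (h q)))"
  shows "pgl_eq S F g h"
  using assms proj_eq_if_mmul_madj_trivial unfolding pgl_eq_def by blast

lemma pgl_discrete_identityE:
  assumes "pgl_subgroup S F \<Gamma>" and "pgl_discrete av S F \<Gamma>"
  obtains e \<epsilon> where "e \<in> \<Gamma>" and "pgl_eq S F (\<lambda>_. mid) e" and "\<epsilon> > 0"
    and "\<And>h. h \<in> \<Gamma> \<Longrightarrow> \<forall>q\<in>S. \<exists>l\<in>F q. l \<noteq> 0 \<and> mclose av \<epsilon> (msc l (h q)) (e q) \<Longrightarrow>
      pgl_eq S F e h"
proof -
  obtain e where "e \<in> \<Gamma>" and "pgl_eq S F (\<lambda>_. mid) e"
    using assms(1) unfolding pgl_subgroup_def by blast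
  moreover from this(1) obtain \<epsilon> where "\<epsilon> > 0" and "\<And>h. h \<in> \<Gamma> \<Longrightarrow>
      \<forall>q\<in>S. \<exists>l\<in>F q. l \<noteq> 0 \<and> mclose av \<epsilon> (msc l (h q)) (e q) \<Longrightarrow> pgl_eq S F e h"
    using assms(2) unfolding pgl_discrete_def by blast
  ultimately show ?thesis using that by blast
qed

lemma pgl_subgroup_mmul_madj:
  assumes \<Gamma>: "pgl_subgroup S F \<Gamma>" and sf: "\<And>q. q \<in> S \<Longrightarrow> subfield (F q)"
    and "g \<in> \<Gamma>" "h \<in> \<Gamma>"
  obtains k where "k \<in> \<Gamma>" and "pgl_eq S F (\<lambda>q. mmul (g q) (madj (h q))) k"
proof -
  obtain k1 where "k1 \<in> \<Gamma>" and k1: "pgl_eq S F (\<lambda>q. madj (h q)) k1"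
    using \<Gamma> \<open>h \<in> \<Gamma>\<close> unfolding pgl_subgroup_def by blast
  obtain k where "k \<in> \<Gamma>" and k: "pgl_eq S F (\<lambda>q. mmul (g q) (k1 q)) k"
    using \<Gamma> \<open>g \<in> \<Gamma>\<close> \<open>k1 \<in> \<Gamma>\<close> unfolding pgl_subgroup_def by blast
  have "pgl_eq S F (\<lambda>q. mmul (g q) (madj (h q))) (\<lambda>q. mmul (g q) (k1 q))"
    using k1 unfolding pgl_eq_def by (simp add: proj_eq_mmul_left)
  with k sf have "pgl_eq S F (\<lambda>q. mmul (g q) (madj (h q))) k"
    unfolding pgl_eq_def using proj_eq_trans by blast
  with \<open>k \<in> \<Gamma>\<close> show ?thesis by (rule that)
qed

section \<open>Non-Archimedean convergence\<close>

locale nonarch_valued =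
  fixes av :: "'c::field \<Rightarrow> real"
  assumes nonarch_abs: "nonarch_abs av"
begin

lemma av_nonneg [simp]: "0 \<le> av x"
  and av_eq_0_iff [simp]: "av x = 0 \<longleftrightarrow> x = 0"
  and av_mult: "av (x * y) = av x * av y"
  and av_ultrametric: "av (x + y) \<le> max (av x) (av y)"
  using nonarch_abs unfolding nonarch_abs_def by blast+

lemma av_0 [simp]: "av 0 = 0"
  by simp

lemma av_pos_iff [simp]: "0 < av x \<longleftrightarrow> x \<noteq> 0"
  using av_nonneg[of x] av_eq_0_iff[of x] by linarith

lemma av_le_0_iff [simp]: "av x \<le> 0 \<longleftrightarrow> x = 0"
  using av_pos_iff[of x] by linarith

lemma av_1 [simp]: "av 1 = 1"
  using av_mult[of 1 1] av_eq_0_iff[of 1] by simp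

lemma av_minus [simp]: "av (- x) = av x"
proof -
  have "av (-1) ^ 2 = 1" using av_mult[of "-1" "-1"] by (simp add: power2_eq_square)
  then have "av (-1) = 1" using av_nonneg[of "-1"] by (simp add: power2_eq_1_iff)
  then show ?thesis using av_mult[of "-1" x] by simp
qed

lemma av_minus_commute: "av (x - y) = av (y - x)"
  using av_minus[of "x - y"] by simp

lemma av_triangle: "av (x + y) \<le> av x + av y"
  using av_ultrametric[of x y] av_nonneg[of x] av_nonneg[of y] by linarith

lemma av_divide: "av (x / y) = av x / av y"
proof (cases "y = 0")
  case False
  have "av (inverse y) * av y = 1"
    using av_mult[of "inverse y" y] False by simp
  then have "av (inverse y) = 1 / av y"
    using False by (simp add: eq_divide_eq)
  then show ?thesis by (simp add: divide_inverse av_mult)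
qed simp

lemma av_diff_eq_if_less:
  assumes "av y < av x"
  shows "av (x - y) = av x"
proof -
  have "av x \<le> max (av (x - y)) (av y)" using av_ultrametric[of "x - y" y] by simp
  moreover have "av (x - y) \<le> max (av x) (av y)" using av_ultrametric[of x "- y"] by simp
  ultimately show ?thesis using assms by (simp add: max_def split: if_split_asm)
qed

lemma av_convI_bound:
  assumes "g \<longlonglongrightarrow> 0" and "\<And>n. av (f n - l) \<le> g n"
  shows "av_conv av f l"
  unfolding av_conv_def using assms by (rule tendsto_zero_squeeze) simp

lemma av_conv_const: "av_conv av (\<lambda>n. c) c"
  by (simp add: av_conv_def)

lemma av_conv_add:
  assumes "av_conv av f a" and "av_conv av g b"
  shows "av_conv av (\<lambda>n. f n + g n) (a + b)"
proof (rule av_convI_bound)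
  show "(\<lambda>n. av (f n - a) + av (g n - b)) \<longlonglongrightarrow> 0"
    using tendsto_add[OF assms[unfolded av_conv_def]] by simp
  show "av (f n + g n - (a + b)) \<le> av (f n - a) + av (g n - b)" for n
    using av_triangle[of "f n - a" "g n - b"] by (simp add: algebra_simps)
qed

lemma av_conv_minus: "av_conv av f a \<Longrightarrow> av_conv av (\<lambda>n. - f n) (- a)"
  using av_minus_commute unfolding av_conv_def by simp

lemma av_conv_mult:
  assumes f: "av_conv av f a" and g: "av_conv av g b"
  shows "av_conv av (\<lambda>n. f n * g n) (a * b)"
proof (rule av_convI_bound)
  have "(\<lambda>n. av (f n - a) * av (g n - b) + av a * av (g n - b) + av (f n - a) * av b)
      \<longlonglongrightarrow> 0 * 0 + av a * 0 + 0 * av b"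
    using f g unfolding av_conv_def by (intro tendsto_intros)
  then show "(\<lambda>n. av (f n - a) * av (g n - b) + av a * av (g n - b) + av (f n - a) * av b) \<longlonglongrightarrow> 0"
    by simp
  show "av (f n * g n - a * b) \<le> av (f n - a) * av (g n - b) + av a * av (g n - b) + av (f n - a) * av b" for n
  proof -
    have "f n * g n - a * b = (f n - a) * (g n - b) + a * (g n - b) + (f n - a) * b"
      by (simp add: algebra_simps)
    then have "av (f n * g n - a * b) \<le> av ((f n - a) * (g n - b) + a * (g n - b)) + av ((f n - a) * b)"
      using av_triangle by simp
    also have "\<dots> \<le> av ((f n - a) * (g n - b)) + av (a * (g n - b)) + av ((f n - a) * b)"
      using av_triangle by (rule add_right_mono)
    finally show ?thesis by (simp add: av_mult)
  qed
qed

lemma av_conv_unique: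
  assumes "av_conv av f a" and "av_conv av f b"
  shows "a = b"
proof -
  have "(\<lambda>n. av (f n - a) + av (f n - b)) \<longlonglongrightarrow> 0"
    using tendsto_add[OF assms[unfolded av_conv_def]] by simp
  moreover have "av (a - b) \<le> av (f n - a) + av (f n - b)" for n
    using av_triangle[of "a - f n" "f n - b"] av_minus_commute[of a "f n"] by simp
  ultimately have "(\<lambda>n. av (a - b)) \<longlonglongrightarrow> 0"
    by (rule tendsto_zero_squeeze) simp
  then show ?thesis by (simp add: LIMSEQ_const_iff)
qed

lemma av_conv_subseq: "av_conv av f l \<Longrightarrow> strict_mono s \<Longrightarrow> av_conv av (\<lambda>n. f (s n)) l"
  unfolding av_conv_def using LIMSEQ_subseq_LIMSEQ[of "\<lambda>n. av (f n - l)" 0 s] by (simp add: o_def)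

lemma av_conv_ignore_initial_segment: "av_conv av f l \<Longrightarrow> av_conv av (\<lambda>n. f (n + k)) l"
  unfolding av_conv_def by (rule LIMSEQ_ignore_initial_segment)

lemma av_conv_imp_tendsto_av:
  assumes "av_conv av f l"
  shows "(\<lambda>n. av (f n)) \<longlonglongrightarrow> av l"
proof -
  have bound: "\<bar>av (f n) - av l\<bar> \<le> av (f n - l)" for n
    using av_triangle[of "f n - l" l] av_triangle[of "l - f n" "f n"] av_minus_commute[of l "f n"]
    by simp
  have "(\<lambda>n. \<bar>av (f n) - av l\<bar>) \<longlonglongrightarrow> 0"
    using assms unfolding av_conv_def by (rule tendsto_zero_squeeze) (simp_all add: bound)
  then have "(\<lambda>n. av (f n) - av l) \<longlonglongrightarrow> 0"
    by (simp add: tendsto_rabs_zero_iff)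
  then show ?thesis by (simp add: LIM_zero_iff)
qed

lemma local_subfield_closed:
  assumes K: "local_subfield av K" and u: "\<And>n. u n \<in> K" and conv: "av_conv av u z"
  shows "z \<in> K"
proof -
  have sf: "subfield K" using K by (rule local_subfield_subfield)
  obtain r where "r > 0" and compact: "\<forall>f :: nat \<Rightarrow> 'c. (\<forall>n. f n \<in> K \<and> av (f n) \<le> r) \<longrightarrow>
      (\<exists>l\<in>K. \<exists>s. strict_mono s \<and> av_conv av (f \<circ> s) l)"
    using K unfolding local_subfield_def by blast
  have "\<forall>\<^sub>F n in sequentially. av (u n - z) < 1"
    using conv unfolding av_conv_def by (rule order_tendstoD) simp
  then obtain N where N: "\<And>n. n \<ge> N \<Longrightarrow> av (u n - z) < 1"
    by (auto simp: eventually_sequentially)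
  define B where "B = max 1 (av z)"
  have "B \<ge> 1" unfolding B_def by simp
  have bounded: "av (u (n + N)) \<le> B" for n
    using av_ultrametric[of "u (n + N) - z" z] N[of "n + N"] unfolding B_def by auto
  have "r / B > 0" using \<open>r > 0\<close> \<open>B \<ge> 1\<close> by simp
  then obtain t where t: "t \<in> K" "0 < av t" "av t < r / B"
    using K unfolding local_subfield_def by blast
  \<comment> \<open>compactness is only available on a ball, so rescale the tail of \<open>u\<close> into it\<close>
  define v where "v n = t * u (n + N)" for n
  have "\<forall>n. v n \<in> K \<and> av (v n) \<le> r"
  proof
    fix n
    have "av t * av (u (n + N)) \<le> r / B * B"
      using t bounded[of n] \<open>r > 0\<close> \<open>B \<ge> 1\<close> by (intro mult_mono) auto
    then show "v n \<in> K \<and> av (v n) \<le> r"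
      using t u \<open>B \<ge> 1\<close> unfolding v_def by (simp add: av_mult subfield_mult[OF sf])
  qed
  then obtain l s where l: "l \<in> K" "strict_mono s" "av_conv av (v \<circ> s) l"
    using compact by blast
  have "av_conv av v (t * z)"
    unfolding v_def by (intro av_conv_mult av_conv_const av_conv_ignore_initial_segment conv)
  then have "av_conv av (v \<circ> s) (t * z)"
    using av_conv_subseq[OF _ l(2)] by (simp add: o_def)
  then have "z = l / t"
    using av_conv_unique[OF _ l(3)] t(2) by (simp add: eq_divide_eq mult.commute)
  then show "z \<in> K" using sf l(1) t(1) by (simp add: subfield_divide)
qed

lemma chord_Some_bound:
  assumes "chord av (Some a) (Some z) < 1 / max 1 (av z)"
  shows "av (a - z) \<le> (max 1 (av z))\<^sup>2 * chord av (Some a) (Some z)"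
proof -
  let ?R = "max 1 (av z)"
  have "av a \<le> ?R"
  proof (rule ccontr)
    assume "\<not> av a \<le> ?R"
    then have "av z < av a" "1 < av a" by auto
    then have "chord av (Some a) (Some z) = av a / (av a * ?R)"
      using av_diff_eq_if_less[of z a] by (simp add: chord_def)
    also have "\<dots> = 1 / ?R" using \<open>1 < av a\<close> by (cases "a = 0") simp_all
    finally show False using assms by simp
  qed
  have "max 1 (av a) \<noteq> 0" "?R \<noteq> 0" by (auto simp: max_def)
  then have "av (a - z) = chord av (Some a) (Some z) * (max 1 (av a) * ?R)"
    by (simp add: chord_def)
  also have "\<dots> \<le> chord av (Some a) (Some z) * (?R * ?R)"
    using \<open>av a \<le> ?R\<close> by (intro mult_left_mono mult_right_mono) (auto simp: chord_def)
  finally show ?thesis by (simp add: power2_eq_square mult_ac)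
qed

lemma p1_conv_SomeE:
  assumes conv: "p1_conv av f (Some z)"
  obtains N w where "\<And>n. n \<ge> N \<Longrightarrow> f n = Some (w n)" and "av_conv av w z"
proof -
  let ?R = "max 1 (av z)"
  have chord: "(\<lambda>n. chord av (f n) (Some z)) \<longlonglongrightarrow> 0"
    using conv unfolding p1_conv_def .
  have "\<forall>\<^sub>F n in sequentially. chord av (f n) (Some z) < 1 / ?R"
    using chord by (rule order_tendstoD) simp
  then obtain N where N: "\<And>n. n \<ge> N \<Longrightarrow> chord av (f n) (Some z) < 1 / ?R"
    by (auto simp: eventually_sequentially)
  define w where "w n = (case f n of None \<Rightarrow> z | Some a \<Rightarrow> a)" for n
  have f: "f n = Some (w n)" if "n \<ge> N" for n
    using N[OF that] by (cases "f n") (simp_all add: w_def chord_def)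
  have "(\<lambda>n. ?R\<^sup>2 * chord av (f n) (Some z)) \<longlonglongrightarrow> ?R\<^sup>2 * 0"
    using chord by (intro tendsto_intros)
  moreover have "av (w n - z) \<le> ?R\<^sup>2 * chord av (f n) (Some z)" if "n \<ge> N" for n
    using chord_Some_bound[of "w n" z] N[OF that] f[OF that] by simp
  then have "\<forall>\<^sub>F n in sequentially. av (w n - z) \<le> ?R\<^sup>2 * chord av (f n) (Some z)"
    unfolding eventually_sequentially by blast
  ultimately have "(\<lambda>n. av (w n - z)) \<longlonglongrightarrow> 0"
    using tendsto_sandwich[OF always_eventually[of "\<lambda>n. 0 \<le> av (w n - z)"]] by simp
  with f that show ?thesis unfolding av_conv_def by blast
qed

lemma p1_conv_subseq: "p1_conv av f x \<Longrightarrow> strict_mono s \<Longrightarrow> p1_conv av (\<lambda>j. f (s j)) x"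
  unfolding p1_conv_def using LIMSEQ_subseq_LIMSEQ[of "\<lambda>n. chord av (f n) x" 0 s] by (simp add: o_def)

lemma p1_conv_in_P1:
  assumes K: "local_subfield av K" and f: "\<And>n. in_P1 K (f n)" and conv: "p1_conv av f x"
  shows "in_P1 K x"
proof (cases x)
  case (Some z)
  then obtain N w where N: "\<And>n. n \<ge> N \<Longrightarrow> f n = Some (w n)" and w: "av_conv av w z"
    using p1_conv_SomeE conv[unfolded Some] by blast
  have "w (n + N) \<in> K" for n
    using f[of "n + N"] N[of "n + N"] by (simp add: in_P1_def)
  then have "z \<in> K"
    using local_subfield_closed[OF K _ av_conv_ignore_initial_segment[OF w]] by blast
  with Some show ?thesis by (simp add: in_P1_def)
qed (simp add: in_P1_def)

lemma mconv_mmul: "mconv av f M \<Longrightarrow> mconv av g N \<Longrightarrow> mconv av (\<lambda>j. mmul (f j) (g j)) (mmul M N)"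
  unfolding mconv_def mmul_entries by (simp add: av_conv_add av_conv_mult)

lemma mconv_madj: "mconv av f M \<Longrightarrow> mconv av (\<lambda>j. madj (f j)) (madj M)"
  unfolding mconv_def madj_entries by (simp add: av_conv_minus)

lemma mconv_msc: "mconv av f M \<Longrightarrow> mconv av (\<lambda>j. msc l (f j)) (msc l M)"
  unfolding mconv_def msc_entries by (simp add: av_conv_mult av_conv_const)

lemma mconv_subseq: "mconv av f M \<Longrightarrow> strict_mono s \<Longrightarrow> mconv av (\<lambda>j. f (s j)) M"
  unfolding mconv_def by (auto intro: av_conv_subseq[where f = "\<lambda>j. _ (f j)"])

lemma mconv_Suc: "mconv av f M \<Longrightarrow> mconv av (\<lambda>j. f (Suc j)) M"
  by (rule mconv_subseq) (simp_all add: strict_mono_Suc_iff)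

lemma mconv_eventually_mclose:
  assumes "mconv av f M" and "\<epsilon> > 0"
  shows "\<forall>\<^sub>F j in sequentially. mclose av \<epsilon> (f j) M"
proof -
  have near: "\<forall>\<^sub>F j in sequentially. av (g j - l) < \<epsilon>" if "av_conv av g l" for g l
    using that \<open>\<epsilon> > 0\<close> unfolding av_conv_def by (rule order_tendstoD)
  have "\<forall>\<^sub>F j in sequentially. av (m11 (f j) - m11 M) < \<epsilon> \<and> av (m12 (f j) - m12 M) < \<epsilon> \<and>
      av (m21 (f j) - m21 M) < \<epsilon> \<and> av (m22 (f j) - m22 M) < \<epsilon>"
    using assms(1) unfolding mconv_def by (intro eventually_conj near) auto
  then show ?thesis
    by (rule eventually_mono) (subst (1 2) mat2_eq_entries, simp)
qed

lemma mconv_mnorm: "mconv av f M \<Longrightarrow> (\<lambda>j. mnorm av (f j)) \<longlonglongrightarrow> mnorm av M"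
  unfolding mconv_def mnorm_def by (intro tendsto_max av_conv_imp_tendsto_av) auto

lemma mnorm_msc: "mnorm av (msc l X) = av l * mnorm av X"
  unfolding mnorm_def msc_entries by (simp add: av_mult max_mult_distrib_left)

lemma mnorm_eq_0_iff: "mnorm av X = 0 \<longleftrightarrow> X = (0, 0, 0, 0)"
  by (subst (2) mat2_eq_entries) (auto simp: mnorm_def max_def)

lemma mnorm_attained: "\<exists>e\<in>{m11 X, m12 X, m21 X, m22 X}. av e = mnorm av X"
  unfolding mnorm_def by (simp add: max_def)

lemma mat_rescale_mnorm:
  assumes K: "subfield K" and X: "mat_over K X" "X \<noteq> (0, 0, 0, 0)"
    and \<rho>: "\<rho> \<in> K" "\<rho> \<noteq> 0"
  obtains \<sigma> where "\<sigma> \<in> K" "\<sigma> \<noteq> 0" "mnorm av (msc \<sigma> X) = av \<rho>"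
proof -
  obtain e where e: "e \<in> {m11 X, m12 X, m21 X, m22 X}" "av e = mnorm av X"
    using mnorm_attained[of X] by blast
  have "e \<in> K" using e(1) X(1) unfolding mat_over_def by auto
  have "e \<noteq> 0" using e(2) X(2) by (auto simp: mnorm_eq_0_iff)
  have "mnorm av (msc (\<rho> / e) X) = av \<rho> / av e * av e"
    by (simp add: mnorm_msc av_divide e(2))
  also have "\<dots> = av \<rho>" using \<open>e \<noteq> 0\<close> by simp
  finally show ?thesis
    using that[of "\<rho> / e"] \<rho> \<open>e \<in> K\<close> \<open>e \<noteq> 0\<close> subfield_divide[OF K] by simp
qed

end

section \<open>Compactness\<close>

text \<open>The radius is taken to be an absolute value \<open>av \<rho>\<close> with \<open>\<rho> \<in> K\<close>, so that every nonzero
  matrix over \<open>K\<close> can be rescaled within \<open>K\<close> to have norm exactly \<open>av \<rho>\<close>.\<close>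
definition mat_compact_radius :: "('c::field \<Rightarrow> real) \<Rightarrow> 'c set \<Rightarrow> 'c \<Rightarrow> bool" where
  "mat_compact_radius av K \<rho> \<longleftrightarrow> \<rho> \<in> K \<and> \<rho> \<noteq> 0 \<and>
     (\<forall>f :: nat \<Rightarrow> 'c mat2. (\<forall>j. mat_over K (f j) \<and> mnorm av (f j) \<le> av \<rho>) \<longrightarrow>
        (\<exists>s M. strict_mono s \<and> mat_over K M \<and> mconv av (\<lambda>j. f (s j)) M))"

lemma mat_compact_radiusD:
  fixes f :: "nat \<Rightarrow> 'c::field mat2"
  assumes "mat_compact_radius av K \<rho>" and "\<And>j. mat_over K (f j)" and "\<And>j. mnorm av (f j) \<le> av \<rho>"
  obtains s M where "strict_mono s" "mat_over K M" "mconv av (\<lambda>j. f (s j)) M"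
proof -
  from assms(1) have "\<forall>f :: nat \<Rightarrow> 'c mat2. (\<forall>j. mat_over K (f j) \<and> mnorm av (f j) \<le> av \<rho>) \<longrightarrow>
      (\<exists>s M. strict_mono s \<and> mat_over K M \<and> mconv av (\<lambda>j. f (s j)) M)"
    unfolding mat_compact_radius_def by (elim conjE)
  from this[rule_format, of f] assms(2,3) that show ?thesis by blast
qed

context nonarch_valued
begin

lemma mat_over_bounded_convergent_subseq:
  fixes f :: "nat \<Rightarrow> 'c mat2"
  assumes compact: "\<forall>f :: nat \<Rightarrow> 'c. (\<forall>n. f n \<in> K \<and> av (f n) \<le> r) \<longrightarrow>
      (\<exists>l\<in>K. \<exists>s. strict_mono s \<and> av_conv av (f \<circ> s) l)"
    and f: "\<And>j. mat_over K (f j)" "\<And>j. mnorm av (f j) \<le> r"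
  shows "\<exists>s M. strict_mono s \<and> mat_over K M \<and> mconv av (\<lambda>j. f (s j)) M"
proof -
  let ?E = "{m11, m12, m21, m22}"
  have entry: "e (f j) \<in> K \<and> av (e (f j)) \<le> r" if "e \<in> ?E" for e j
    using f(1,2)[of j] that unfolding mat_over_def mnorm_def by auto
  have "\<exists>s. strict_mono s \<and> (\<forall>e\<in>?E. \<exists>l. l \<in> K \<and> av_conv av (\<lambda>j. e (f (s j))) l)"
  proof (rule strict_mono_common_subseq)
    fix e :: "'c mat2 \<Rightarrow> 'c" and t :: "nat \<Rightarrow> nat"
    assume "e \<in> ?E"
    then have "\<forall>n. e (f (t n)) \<in> K \<and> av (e (f (t n))) \<le> r" using entry by blast
    then obtain l u where "l \<in> K" "strict_mono u" "av_conv av ((\<lambda>j. e (f (t j))) \<circ> u) l"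
      using compact[rule_format, of "\<lambda>j. e (f (t j))"] by blast
    then show "\<exists>u. strict_mono u \<and> (\<exists>l. l \<in> K \<and> av_conv av (\<lambda>j. e (f ((t \<circ> u) j))) l)"
      unfolding comp_def by blast
  next
    fix e t and u :: "nat \<Rightarrow> nat"
    assume "\<exists>l. l \<in> K \<and> av_conv av (\<lambda>j. e (f (t j))) l" and "strict_mono u"
    then show "\<exists>l. l \<in> K \<and> av_conv av (\<lambda>j. e (f ((t \<circ> u) j))) l"
      unfolding comp_def using av_conv_subseq[where f = "\<lambda>j. e (f (t j))"] by blast
  qed simp
  then obtain s where "strict_mono s"
    and "\<forall>e\<in>?E. \<exists>l. l \<in> K \<and> av_conv av (\<lambda>j. e (f (s j))) l"
    by blast
  moreover from bchoice[OF this(2)] obtain l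
    where "\<forall>e\<in>?E. l e \<in> K \<and> av_conv av (\<lambda>j. e (f (s j))) (l e)" ..
  then have "mat_over K (l m11, l m12, l m21, l m22)"
    and "mconv av (\<lambda>j. f (s j)) (l m11, l m12, l m21, l m22)"
    unfolding mat_over_def mconv_def by simp_all
  ultimately show ?thesis by blast
qed

lemma local_subfield_mat_compact_radius:
  assumes K: "local_subfield av K"
  shows "\<exists>\<rho>. mat_compact_radius av K \<rho>"
proof -
  obtain r where "r > 0" and compact: "\<forall>f :: nat \<Rightarrow> 'c. (\<forall>n. f n \<in> K \<and> av (f n) \<le> r) \<longrightarrow>
      (\<exists>l\<in>K. \<exists>s. strict_mono s \<and> av_conv av (f \<circ> s) l)"
    using K unfolding local_subfield_def by blast
  obtain \<rho> where \<rho>: "\<rho> \<in> K" "0 < av \<rho>" "av \<rho> < r"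
    using K \<open>r > 0\<close> unfolding local_subfield_def by blast
  have "mat_compact_radius av K \<rho>"
    unfolding mat_compact_radius_def
  proof (intro conjI allI impI)
    show "\<rho> \<in> K" "\<rho> \<noteq> 0" using \<rho> by auto
    fix f :: "nat \<Rightarrow> 'c mat2"
    assume "\<forall>j. mat_over K (f j) \<and> mnorm av (f j) \<le> av \<rho>"
    then have "mat_over K (f j)" and "mnorm av (f j) \<le> r" for j
      using \<rho>(3) by (blast, meson less_imp_le order_trans)
    then show "\<exists>s M. strict_mono s \<and> mat_over K M \<and> mconv av (\<lambda>j. f (s j)) M"
      by (rule mat_over_bounded_convergent_subseq[OF compact])
  qed
  then show ?thesis ..
qed

lemma mat_compact_radius_common_subseq:
  fixes f :: "nat \<Rightarrow> 'i \<Rightarrow> 'c mat2"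
  assumes "finite S" and \<rho>: "\<And>q. q \<in> S \<Longrightarrow> mat_compact_radius av (F q) (\<rho> q)"
    and f: "\<And>j q. q \<in> S \<Longrightarrow> mat_over (F q) (f j q)" "\<And>j q. q \<in> S \<Longrightarrow> mnorm av (f j q) \<le> av (\<rho> q)"
  obtains s M where "strict_mono s"
    and "\<And>q. q \<in> S \<Longrightarrow> mat_over (F q) (M q) \<and> mconv av (\<lambda>j. f (s j) q) (M q)"
proof -
  have "\<exists>s. strict_mono s \<and> (\<forall>q\<in>S. \<exists>M. mat_over (F q) M \<and> mconv av (\<lambda>j. f (s j) q) M)"
  proof (rule strict_mono_common_subseq[OF \<open>finite S\<close>])
    fix q and t :: "nat \<Rightarrow> nat"
    assume q: "q \<in> S"
    from mat_compact_radiusD[OF \<rho>[OF q], of "\<lambda>j. f (t j) q"] f[OF q]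
    obtain u M where "strict_mono u" "mat_over (F q) M" "mconv av (\<lambda>j. f (t (u j)) q) M"
      by blast
    then show "\<exists>u. strict_mono u \<and> (\<exists>M. mat_over (F q) M \<and> mconv av (\<lambda>j. f ((t \<circ> u) j) q) M)"
      unfolding o_def by blast
  next
    fix q t and u :: "nat \<Rightarrow> nat"
    assume "\<exists>M. mat_over (F q) M \<and> mconv av (\<lambda>j. f (t j) q) M" and "strict_mono u"
    then show "\<exists>M. mat_over (F q) M \<and> mconv av (\<lambda>j. f ((t \<circ> u) j) q) M"
      unfolding o_def using mconv_subseq[where f = "\<lambda>j. f (t j) q"] by blast
  qed
  then obtain s where "strict_mono s"
    and "\<forall>q\<in>S. \<exists>M. mat_over (F q) M \<and> mconv av (\<lambda>j. f (s j) q) M"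
    by blast
  moreover from bchoice[OF this(2)] obtain M
    where "\<forall>q\<in>S. mat_over (F q) (M q) \<and> mconv av (\<lambda>j. f (s j) q) (M q)" ..
  ultimately show ?thesis using that by blast
qed

lemma normalized_convergent_subseq:
  fixes g :: "nat \<Rightarrow> 'i \<Rightarrow> 'c mat2"
  assumes "finite S" and K: "\<And>q. q \<in> S \<Longrightarrow> local_subfield av (F q)"
    and g: "\<And>j q. q \<in> S \<Longrightarrow> gl2 (F q) (g j q)"
  obtains s \<sigma> M where "strict_mono s"
    and "\<And>j q. q \<in> S \<Longrightarrow> \<sigma> j q \<in> F q \<and> \<sigma> j q \<noteq> 0"
    and "\<And>q. q \<in> S \<Longrightarrow> mat_over (F q) (M q)" and "\<And>q. q \<in> S \<Longrightarrow> M q \<noteq> (0, 0, 0, 0)"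
    and "\<And>q. q \<in> S \<Longrightarrow> mconv av (\<lambda>j. msc (\<sigma> j q) (g (s j) q)) (M q)"
proof -
  have sf: "subfield (F q)" if "q \<in> S" for q
    using K[OF that] by (rule local_subfield_subfield)
  have "\<forall>q\<in>S. \<exists>\<rho>. mat_compact_radius av (F q) \<rho>"
    using local_subfield_mat_compact_radius K by blast
  from bchoice[OF this] obtain \<rho> where \<rho>: "\<And>q. q \<in> S \<Longrightarrow> mat_compact_radius av (F q) (\<rho> q)"
    by blast
  define \<sigma> where "\<sigma> j q = (SOME \<sigma>. \<sigma> \<in> F q \<and> \<sigma> \<noteq> 0 \<and> mnorm av (msc \<sigma> (g j q)) = av (\<rho> q))"
    for j q
  have \<sigma>: "\<sigma> j q \<in> F q \<and> \<sigma> j q \<noteq> 0 \<and> mnorm av (msc (\<sigma> j q) (g j q)) = av (\<rho> q)"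
    if q: "q \<in> S" for j q
    unfolding \<sigma>_def
  proof (rule someI_ex)
    have "mat_over (F q) (g j q)" "g j q \<noteq> (0, 0, 0, 0)"
      using g[OF q, of j] by (auto simp: gl2_imp_mat_over gl2_def)
    with \<rho>[OF q] show "\<exists>\<sigma>. \<sigma> \<in> F q \<and> \<sigma> \<noteq> 0 \<and> mnorm av (msc \<sigma> (g j q)) = av (\<rho> q)"
      using mat_rescale_mnorm[OF sf[OF q]] unfolding mat_compact_radius_def by blast
  qed
  define n where "n j q = msc (\<sigma> j q) (g j q)" for j q
  have "mat_over (F q) (n j q)" "mnorm av (n j q) \<le> av (\<rho> q)" if q: "q \<in> S" for j q
    using \<sigma>[OF q] g[OF q] sf[OF q] unfolding n_def by (simp_all add: mat_over_msc gl2_imp_mat_over)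
  from mat_compact_radius_common_subseq[where f = n, OF \<open>finite S\<close> \<rho> this]
  obtain s M where "strict_mono s"
    and M: "\<And>q. q \<in> S \<Longrightarrow> mat_over (F q) (M q) \<and> mconv av (\<lambda>j. n (s j) q) (M q)"
    by blast
  have "M q \<noteq> (0, 0, 0, 0)" if q: "q \<in> S" for q
  proof -
    have "(\<lambda>j. av (\<rho> q)) \<longlonglongrightarrow> mnorm av (M q)"
      using mconv_mnorm[of "\<lambda>j. n (s j) q"] M[OF q] \<sigma>[OF q] unfolding n_def by simp
    then have "mnorm av (M q) = av (\<rho> q)" by (simp add: LIMSEQ_const_iff)
    then have "mnorm av (M q) \<noteq> 0" using \<rho>[OF q] by (simp add: mat_compact_radius_def)
    then show ?thesis by (simp add: mnorm_eq_0_iff)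
  qed
  then show ?thesis
    using that[of s "\<lambda>j. \<sigma> (s j)" M] \<open>strict_mono s\<close> \<sigma> M unfolding n_def by blast
qed

section \<open>Limit points of discrete subgroups\<close>

lemma moebius_limit_eq:
  assumes M: "mconv av n M" and N: "\<And>j. j \<ge> N \<Longrightarrow> moebius (n j) (Some z) = Some (w j)"
    and w: "av_conv av w z'"
  shows "z' * (m21 M * z + m22 M) = m11 M * z + m12 M"
proof -
  define u where "u j = m11 (n j) * z + m12 (n j)" for j
  define v where "v j = m21 (n j) * z + m22 (n j)" for j
  have "w j * v j = u j" if "j \<ge> N" for j
    using N[OF that] unfolding u_def v_def
    by (subst (asm) mat2_eq_entries) (simp add: divide_eq_eq split: if_splits)
  then have "(\<lambda>j. w (j + N) * v (j + N)) = (\<lambda>j. u (j + N))" by simp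
  moreover have "av_conv av v (m21 M * z + m22 M)"
    using M unfolding v_def mconv_def by (intro av_conv_add av_conv_mult av_conv_const) auto
  then have "av_conv av (\<lambda>j. w (j + N) * v (j + N)) (z' * (m21 M * z + m22 M))"
    using av_conv_mult[OF av_conv_ignore_initial_segment[OF w]] av_conv_ignore_initial_segment
    by blast
  ultimately have "av_conv av (\<lambda>j. u (j + N)) (z' * (m21 M * z + m22 M))"
    by simp
  moreover have "av_conv av u (m11 M * z + m12 M)"
    using M unfolding u_def mconv_def by (intro av_conv_add av_conv_mult av_conv_const) auto
  then have "av_conv av (\<lambda>j. u (j + N)) (m11 M * z + m12 M)"
    by (rule av_conv_ignore_initial_segment)
  ultimately show ?thesis
    by (rule av_conv_unique)
qed

lemma singular_limit_in_P1:
  assumes K: "local_subfield av K" and n: "\<And>j. mat_over K (n j)"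
    and M: "mconv av n M" "mat_over K M" "M \<noteq> (0, 0, 0, 0)" "mdet M = 0"
    and x: "p1_conv av (\<lambda>j. moebius (n j) y) x"
  shows "in_P1 K x"
proof -
  have sf: "subfield K" using K by (rule local_subfield_subfield)
  show ?thesis
  proof (cases "in_P1 K y")
    case True
    then show ?thesis
      using p1_conv_in_P1[OF K _ x] moebius_in_P1[OF sf n] by blast
  next
    case False
    then obtain z where y: "y = Some z" and "z \<notin> K" by (cases y) (auto simp: in_P1_def)
    show ?thesis
    proof (cases x)
      case (Some z')
      then obtain N w where "\<And>j. j \<ge> N \<Longrightarrow> moebius (n j) (Some z) = Some (w j)"
        and "av_conv av w z'"
        using p1_conv_SomeE x y by blast
      from moebius_limit_eq[OF M(1) this] show ?thesis
        using singular_mat_value_in[OF sf M(2-4) \<open>z \<notin> K\<close>] Some by (simp add: in_P1_def)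
    qed (simp add: in_P1_def)
  qed
qed

lemma rescaled_singular_limit_in_P1:
  assumes K: "local_subfield av K" and g: "\<And>j. gl2 K (g j)"
    and \<sigma>: "\<And>j. \<sigma> j \<in> K \<and> \<sigma> j \<noteq> 0" and s: "strict_mono s"
    and M: "mconv av (\<lambda>j. msc (\<sigma> j) (g (s j))) M" "mat_over K M" "M \<noteq> (0, 0, 0, 0)" "mdet M = 0"
    and x: "p1_conv av (\<lambda>j. moebius (g j) y) x"
  shows "in_P1 K x"
proof (rule singular_limit_in_P1[OF K _ M])
  show "mat_over K (msc (\<sigma> j) (g (s j)))" for j
    using mat_over_msc[OF local_subfield_subfield[OF K]] \<sigma> gl2_imp_mat_over[OF g] by blast
  show "p1_conv av (\<lambda>j. moebius (msc (\<sigma> j) (g (s j))) y) x"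
    using p1_conv_subseq[OF x s] \<sigma> by (simp add: moebius_msc)
qed

lemma mconv_mmul_madj_Suc:
  assumes "mconv av f M" and "mdet M \<noteq> 0"
  shows "mconv av (\<lambda>j. msc (c / mdet M) (mmul (f j) (madj (f (Suc j))))) (msc c mid)"
proof -
  have "mconv av (\<lambda>j. msc (c / mdet M) (mmul (f j) (madj (f (Suc j)))))
      (msc (c / mdet M) (mmul M (madj M)))"
    by (intro mconv_msc mconv_mmul mconv_madj mconv_Suc assms(1))
  then show ?thesis using assms(2) by (simp add: mmul_madj msc_msc)
qed

lemma pgl_discrete_convergent_repeats:
  fixes g :: "nat \<Rightarrow> 'i \<Rightarrow> 'c mat2"
  assumes "finite S" and sf: "\<And>q. q \<in> S \<Longrightarrow> subfield (F q)"
    and \<Gamma>: "pgl_subgroup S F \<Gamma>" and disc: "pgl_discrete av S F \<Gamma>"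
    and g: "\<And>j. g j \<in> \<Gamma>"
    and \<sigma>: "\<And>j q. q \<in> S \<Longrightarrow> \<sigma> j q \<in> F q \<and> \<sigma> j q \<noteq> 0"
    and M: "\<And>q. q \<in> S \<Longrightarrow> mat_over (F q) (M q)" "\<And>q. q \<in> S \<Longrightarrow> mdet (M q) \<noteq> 0"
      "\<And>q. q \<in> S \<Longrightarrow> mconv av (\<lambda>j. msc (\<sigma> j q) (g j q)) (M q)"
  obtains j where "pgl_eq S F (g j) (g (Suc j))"
proof -
  obtain e \<epsilon> where "e \<in> \<Gamma>" and e: "pgl_eq S F (\<lambda>_. mid) e" and "\<epsilon> > 0"
    and near_e: "\<And>h. h \<in> \<Gamma> \<Longrightarrow>
      \<forall>q\<in>S. \<exists>l\<in>F q. l \<noteq> 0 \<and> mclose av \<epsilon> (msc l (h q)) (e q) \<Longrightarrow> pgl_eq S F e h"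
    using pgl_discrete_identityE[OF \<Gamma> disc] by blast
  then have "\<forall>q\<in>S. \<exists>c. c \<in> F q \<and> c \<noteq> 0 \<and> e q = msc c mid"
    unfolding pgl_eq_def proj_eq_def by blast
  from bchoice[OF this] obtain c where c: "\<And>q. q \<in> S \<Longrightarrow> c q \<in> F q \<and> c q \<noteq> 0 \<and> e q = msc (c q) mid"
    by blast
  \<comment> \<open>\<open>X q j\<close> rescales \<open>g j q \<cdot> (g (Suc j) q)\<^sup>-\<^sup>1\<close>; it tends to the representative \<open>e q\<close> of the identity\<close>
  define X where "X q j = msc (c q / mdet (M q))
      (mmul (msc (\<sigma> j q) (g j q)) (madj (msc (\<sigma> (Suc j) q) (g (Suc j) q))))" for q j
  have "mconv av (X q) (e q)" if q: "q \<in> S" for q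
    using mconv_mmul_madj_Suc[of "\<lambda>j. msc (\<sigma> j q) (g j q)" "M q" "c q"] M(2,3)[OF q] c[OF q]
    unfolding X_def by simp
  then have "\<forall>\<^sub>F j in sequentially. \<forall>q\<in>S. mclose av \<epsilon> (X q j) (e q)"
    using \<open>finite S\<close> \<open>\<epsilon> > 0\<close> by (simp add: eventually_ball_finite mconv_eventually_mclose)
  then obtain j where close: "\<And>q. q \<in> S \<Longrightarrow> mclose av \<epsilon> (X q j) (e q)"
    unfolding eventually_sequentially by blast
  obtain k where "k \<in> \<Gamma>" and k: "pgl_eq S F (\<lambda>q. mmul (g j q) (madj (g (Suc j) q))) k"
    using pgl_subgroup_mmul_madj[OF \<Gamma> sf g g] by blast
  have "pgl_eq S F e k"
  proof (rule near_e[OF \<open>k \<in> \<Gamma>\<close>], intro ballI)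
    fix q assume q: "q \<in> S"
    obtain d where d: "d \<in> F q" "d \<noteq> 0" "k q = msc d (mmul (g j q) (madj (g (Suc j) q)))"
      using k q unfolding pgl_eq_def proj_eq_def by blast
    define l where "l = c q * \<sigma> j q * \<sigma> (Suc j) q / (mdet (M q) * d)"
    have "X q j = msc l (k q)"
      unfolding X_def d(3) l_def using d(2) M(2)[OF q]
      by (simp add: madj_msc mmul_msc_left mmul_msc_right msc_msc field_simps)
    moreover have "l \<in> F q" "l \<noteq> 0"
      unfolding l_def using sf[OF q] c[OF q] \<sigma>[OF q] \<sigma>[OF q, of "Suc j"] d M(1,2)[OF q]
      by (simp_all add: subfield_closed mdet_in)
    ultimately show "\<exists>l\<in>F q. l \<noteq> 0 \<and> mclose av \<epsilon> (msc l (k q)) (e q)"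
      using close[OF q] by auto
  qed
  have "pgl_eq S F (\<lambda>_. mid) (\<lambda>q. mmul (g j q) (madj (g (Suc j) q)))"
    unfolding pgl_eq_def
  proof
    fix q assume q: "q \<in> S"
    have "proj_eq (F q) mid (k q)"
      using proj_eq_trans[OF sf[OF q]] e \<open>pgl_eq S F e k\<close> q unfolding pgl_eq_def by blast
    then show "proj_eq (F q) mid (mmul (g j q) (madj (g (Suc j) q)))"
      using proj_eq_trans[OF sf[OF q]] proj_eq_sym[OF sf[OF q]] k q unfolding pgl_eq_def by blast
  qed
  moreover have "gl2 (F q) (g i q)" if "q \<in> S" for i q
    using \<Gamma> g that unfolding pgl_subgroup_def by blast
  ultimately show ?thesis
    using that pgl_eq_if_mmul_madj_trivial[where g = "g j" and h = "g (Suc j)"] sf by blast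
qed

end

theorem lemma2p5:
  fixes p :: nat and av :: "'c::field \<Rightarrow> real"
    and S :: "'i set" and F :: "'i \<Rightarrow> 'c set" and \<Gamma> :: "('i \<Rightarrow> 'c mat2) set"
  assumes "is_C p av"
    and "finite S" and "S \<noteq> {}"
    and "\<forall>q\<in>S. local_subfield av (F q)"
    and "pgl_subgroup S F \<Gamma>"
    and "pgl_discrete av S F \<Gamma>"
    and "x \<in> limit_set av S F \<Gamma>"
  shows "\<exists>q\<in>S. in_P1 (F q) (x q)"
proof (rule ccontr)
  assume none: "\<not> (\<exists>q\<in>S. in_P1 (F q) (x q))"
  interpret nonarch_valued av
    using assms(1) by unfold_locales (simp add: is_C_def)
  have K: "local_subfield av (F q)" and sf: "subfield (F q)" if "q \<in> S" for q
    using assms(4) that local_subfield_subfield by blast+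
  obtain y \<gamma> where \<gamma>: "\<And>j. \<gamma> j \<in> \<Gamma>" and distinct: "\<And>i j. i \<noteq> j \<Longrightarrow> \<not> pgl_eq S F (\<gamma> i) (\<gamma> j)"
    and conv: "\<And>q. q \<in> S \<Longrightarrow> p1_conv av (\<lambda>j. moebius (\<gamma> j q) (y q)) (x q)"
    using assms(7) unfolding limit_set_def by blast
  have gl: "gl2 (F q) (\<gamma> j q)" if "q \<in> S" for j q
    using assms(5) \<gamma> that unfolding pgl_subgroup_def by blast
  from normalized_convergent_subseq[where g = \<gamma>, OF assms(2) K gl]
  obtain s \<sigma> M where s: "strict_mono s" and \<sigma>: "\<And>j q. q \<in> S \<Longrightarrow> \<sigma> j q \<in> F q \<and> \<sigma> j q \<noteq> 0"
    and M: "\<And>q. q \<in> S \<Longrightarrow> mat_over (F q) (M q)" "\<And>q. q \<in> S \<Longrightarrow> M q \<noteq> (0, 0, 0, 0)"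
      "\<And>q. q \<in> S \<Longrightarrow> mconv av (\<lambda>j. msc (\<sigma> j q) (\<gamma> (s j) q)) (M q)"
    by blast
  have "mdet (M q) \<noteq> 0" if q: "q \<in> S" for q
  proof
    assume "mdet (M q) = 0"
    with rescaled_singular_limit_in_P1[where \<sigma> = "\<lambda>j. \<sigma> j q", OF K[OF q] gl[OF q] \<sigma>[OF q] s
        M(3)[OF q] M(1,2)[OF q]] conv[OF q]
    have "in_P1 (F q) (x q)" by blast
    with none q show False by blast
  qed
  from pgl_discrete_convergent_repeats[where g = "\<lambda>j. \<gamma> (s j)", OF assms(2) sf assms(5,6) \<gamma> \<sigma>
      M(1) this M(3)]
  obtain j where "pgl_eq S F (\<gamma> (s j)) (\<gamma> (s (Suc j)))" by blast
  moreover have "s j \<noteq> s (Suc j)" using strict_monoD[OF s, of j "Suc j"] by simp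
  ultimately show False using distinct by blast
qed

end
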